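(* For every $\theta\in V_\Lambda$, $\mathcal P(\theta)^\perp=\overline{\mathcal Q}(\theta)$ and ${}^\perp\overline{\mathcal Q}(\theta)=\mathcal P(\theta)$. In particular, if $\mathcal W(\theta)=\{0\}$ then $\overline{\mathcal Q}(\theta)=\mathcal Q(\theta)$, so $\mathcal Q(\theta)=\mathcal P(\theta)^\perp$ and $\mathcal P(\theta)={}^\perp\mathcal Q(\theta)$.
   Context: Let $\Lambda$ be a finite dimensional algebra over a field with $n$ isoclasses of simple modules, and $\mathrm{mod}\text-\Lambda$ the category of finitely generated right $\Lambda$-modules. Fix a torsion class $\mathcal G\subseteq\mathrm{mod}\text-\Lambda$ (closed under isomorphisms, extensions and quotients). For $B\in\mathcal G$, a subobject of $B$ is a submodule in $\mathcal G$; a subobject $A\subseteq B$ is strict if $A\cap B'\in\mathcal G$ for every subobject $B'$ of $B$; a strict quotient of $B$ is $B/A$ with $A$ a strict subobject. A strict morphism is a homomorphism $f:A\to B$ with $A,B\in\mathcal G$ such that $\ker f\in\mathcal G$ is a strict subobject of $A$ and $\operatorname{im} f$ is a strict subobject of $B$. For $\mathcal X\subseteq\mathcal G$, $\mathcal X^\perp$ is the class of $Y\in\mathcal G$ such that every strict morphism $X\to Y$ with $X\in\mathcal X$ is zero, and ${}^\perp\mathcal X$ is the class of $Y\in\mathcal G$ such that every strict morphism $Y\to X$ with $X\in\mathcal X$ is zero. Let $V_\Lambda=\mathrm{Hom}_{\mathbb Z}(K_0\Lambda,\mathbb R)\cong\mathbb R^n$; $\theta(M)$ denotes $\theta$ applied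 to the dimension vector of $M$. Define: $\mathcal P(\theta)$ = $\{0\}$ together with all nonzero $M\in\mathcal G$ with $\theta(M'')>0$ for every nonzero strict quotient $M''$ of $M$ (including $M$); $\mathcal Q(\theta)$ = $\{0\}$ together with all nonzero $N\in\mathcal G$ with $\theta(N')<0$ for every nonzero strict subobject $N'$ of $N$ (including $N$); $\overline{\mathcal Q}(\theta)$ = all $N\in\mathcal G$ with $\theta(N')\le0$ for every strict subobject $N'$ of $N$. For $M\in\mathcal G$, $D_{\mathcal G}(M)$ is the set of $\theta$ with $\theta(M)=0$ and $\theta(M')\le0$ for all strict subobjects $M'$ of $M$, and $\mathcal W(\theta)$ is the class of $X\in\mathcal G$ with $\theta\in D_{\mathcal G}(X)$. *)

theory Defs
  imports Complex_Main
begin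

text \<open>The algebra Lambda is the type 'l (a ring with 1); it is an algebra over the
field 'k via a central ring homomorphism iota, and finite dimensional over 'k.\<close>

definition fd_algebra :: "('k::field \<Rightarrow> 'l::ring_1) \<Rightarrow> bool" where
  "fd_algebra \<iota> \<longleftrightarrow>
     \<iota> 1 = 1 \<and> (\<forall>a b. \<iota> (a + b) = \<iota> a + \<iota> b) \<and> (\<forall>a b. \<iota> (a * b) = \<iota> a * \<iota> b) \<and>
     (\<forall>a x. \<iota> a * x = x * \<iota> a) \<and>
     (\<exists>S. finite S \<and> (\<forall>x. \<exists>c. x = (\<Sum>s\<in>S. \<iota> (c s) * s)))"

section \<open>Right modules, living inside a fixed universe type 'm\<close>

record ('l, 'm) rmod =
  mcar :: "'m set"
  madd :: "'m \<Rightarrow> 'm \<Rightarrow> 'm"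
  mzero :: 'm
  mact :: "'m \<Rightarrow> 'l \<Rightarrow> 'm"

definition is_rmod :: "('l::ring_1, 'm) rmod \<Rightarrow> bool" where
  "is_rmod M \<longleftrightarrow>
     mzero M \<in> mcar M \<and>
     (\<forall>x\<in>mcar M. \<forall>y\<in>mcar M. madd M x y \<in> mcar M) \<and>
     (\<forall>x\<in>mcar M. \<forall>a. mact M x a \<in> mcar M) \<and>
     (\<forall>x\<in>mcar M. \<forall>y\<in>mcar M. \<forall>z\<in>mcar M. madd M (madd M x y) z = madd M x (madd M y z)) \<and>
     (\<forall>x\<in>mcar M. \<forall>y\<in>mcar M. madd M x y = madd M y x) \<and>
     (\<forall>x\<in>mcar M. madd M (mzero M) x = x) \<and>
     (\<forall>x\<in>mcar M. \<exists>y\<in>mcar M. madd M x y = mzero M) \<and>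
     (\<forall>x\<in>mcar M. \<forall>y\<in>mcar M. \<forall>a. mact M (madd M x y) a = madd M (mact M x a) (mact M y a)) \<and>
     (\<forall>x\<in>mcar M. \<forall>a b. mact M x (a + b) = madd M (mact M x a) (mact M x b)) \<and>
     (\<forall>x\<in>mcar M. \<forall>a b. mact M x (a * b) = mact M (mact M x a) b) \<and>
     (\<forall>x\<in>mcar M. mact M x 1 = x)"

definition is_submod :: "('l::ring_1, 'm) rmod \<Rightarrow> 'm set \<Rightarrow> bool" where
  "is_submod M N \<longleftrightarrow> N \<subseteq> mcar M \<and> mzero M \<in> N \<and>
     (\<forall>x\<in>N. \<forall>y\<in>N. madd M x y \<in> N) \<and> (\<forall>x\<in>N. \<forall>a. mact M x a \<in> N)"

definition subm :: "('l, 'm) rmod \<Rightarrow> 'm set \<Rightarrow> ('l, 'm) rmod" where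
  "subm M N = M\<lparr>mcar := N\<rparr>"

definition rspan :: "('l::ring_1, 'm) rmod \<Rightarrow> 'm set \<Rightarrow> 'm set" where
  "rspan M S = \<Inter> {N. is_submod M N \<and> S \<subseteq> N}"

definition fin_gen :: "('l::ring_1, 'm) rmod \<Rightarrow> bool" where
  "fin_gen M \<longleftrightarrow> (\<exists>S. finite S \<and> S \<subseteq> mcar M \<and> rspan M S = mcar M)"

definition fgmod :: "('l::ring_1, 'm) rmod \<Rightarrow> bool" where
  "fgmod M \<longleftrightarrow> is_rmod M \<and> fin_gen M"

definition is_zero :: "('l, 'm) rmod \<Rightarrow> bool" where
  "is_zero M \<longleftrightarrow> mcar M = {mzero M}"

definition is_hom :: "('l::ring_1, 'm) rmod \<Rightarrow> ('l, 'm) rmod \<Rightarrow> ('m \<Rightarrow> 'm) \<Rightarrow> bool" where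
  "is_hom M N f \<longleftrightarrow> (\<forall>x\<in>mcar M. f x \<in> mcar N) \<and>
     (\<forall>x\<in>mcar M. \<forall>y\<in>mcar M. f (madd M x y) = madd N (f x) (f y)) \<and>
     (\<forall>x\<in>mcar M. \<forall>a. f (mact M x a) = mact N (f x) a)"

definition hker :: "('l, 'm) rmod \<Rightarrow> ('l, 'm) rmod \<Rightarrow> ('m \<Rightarrow> 'm) \<Rightarrow> 'm set" where
  "hker M N f = {x \<in> mcar M. f x = mzero N}"

definition is_iso :: "('l::ring_1, 'm) rmod \<Rightarrow> ('l, 'm) rmod \<Rightarrow> bool" where
  "is_iso M N \<longleftrightarrow> (\<exists>f. is_hom M N f \<and> bij_betw f (mcar M) (mcar N))"

definition is_ses :: "('l::ring_1, 'm) rmod \<Rightarrow> ('l, 'm) rmod \<Rightarrow> ('l, 'm) rmod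
                      \<Rightarrow> ('m \<Rightarrow> 'm) \<Rightarrow> ('m \<Rightarrow> 'm) \<Rightarrow> bool" where
  "is_ses A B C f g \<longleftrightarrow> is_hom A B f \<and> inj_on f (mcar A) \<and> is_hom B C g \<and>
     g ` mcar B = mcar C \<and> f ` mcar A = hker B C g"

definition torsion_class :: "('l::ring_1, 'm) rmod set \<Rightarrow> bool" where
  "torsion_class \<G> \<longleftrightarrow>
     (\<forall>M\<in>\<G>. fgmod M) \<and>
     (\<forall>M. fgmod M \<and> is_zero M \<longrightarrow> M \<in> \<G>) \<and>
     (\<forall>M N. M \<in> \<G> \<and> fgmod N \<and> is_iso M N \<longrightarrow> N \<in> \<G>) \<and>
     (\<forall>A B C f g. A \<in> \<G> \<and> C \<in> \<G> \<and> fgmod B \<and> is_ses A B C f g \<longrightarrow> B \<in> \<G>) \<and>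
     (\<forall>M N g. M \<in> \<G> \<and> fgmod N \<and> is_hom M N g \<and> g ` mcar M = mcar N \<longrightarrow> N \<in> \<G>)"

definition subobj :: "('l::ring_1, 'm) rmod set \<Rightarrow> ('l, 'm) rmod \<Rightarrow> 'm set \<Rightarrow> bool" where
  "subobj \<G> B A \<longleftrightarrow> is_submod B A \<and> subm B A \<in> \<G>"

definition strict_subobj :: "('l::ring_1, 'm) rmod set \<Rightarrow> ('l, 'm) rmod \<Rightarrow> 'm set \<Rightarrow> bool" where
  "strict_subobj \<G> B A \<longleftrightarrow> subobj \<G> B A \<and>
     (\<forall>B'. subobj \<G> B B' \<longrightarrow> subm B (A \<inter> B') \<in> \<G>)"

text \<open>M'' is a strict quotient of B: M'' is (a copy of) B/A with A a strict subobject,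
  i.e. there is a surjective homomorphism B -> M'' whose kernel is a strict subobject.\<close>

definition strict_quot :: "('l::ring_1, 'm) rmod set \<Rightarrow> ('l, 'm) rmod \<Rightarrow> ('l, 'm) rmod \<Rightarrow> bool" where
  "strict_quot \<G> B M'' \<longleftrightarrow> fgmod M'' \<and>
     (\<exists>g. is_hom B M'' g \<and> g ` mcar B = mcar M'' \<and> strict_subobj \<G> B (hker B M'' g))"

definition strict_morph :: "('l::ring_1, 'm) rmod set \<Rightarrow> ('l, 'm) rmod \<Rightarrow> ('l, 'm) rmod
                            \<Rightarrow> ('m \<Rightarrow> 'm) \<Rightarrow> bool" where
  "strict_morph \<G> A B f \<longleftrightarrow> A \<in> \<G> \<and> B \<in> \<G> \<and> is_hom A B f \<and>
     subm A (hker A B f) \<in> \<G> \<and> strict_subobj \<G> A (hker A B f) \<and>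
     strict_subobj \<G> B (f ` mcar A)"

definition rperp :: "('l::ring_1, 'm) rmod set \<Rightarrow> ('l, 'm) rmod set \<Rightarrow> ('l, 'm) rmod set" where
  "rperp \<G> \<X> = {Y \<in> \<G>. \<forall>X\<in>\<X>. \<forall>f. strict_morph \<G> X Y f \<longrightarrow> (\<forall>x\<in>mcar X. f x = mzero Y)}"

definition lperp :: "('l::ring_1, 'm) rmod set \<Rightarrow> ('l, 'm) rmod set \<Rightarrow> ('l, 'm) rmod set" where
  "lperp \<G> \<X> = {Y \<in> \<G>. \<forall>X\<in>\<X>. \<forall>f. strict_morph \<G> Y X f \<longrightarrow> (\<forall>y\<in>mcar Y. f y = mzero X)}"

section \<open>Stability functions: V_Lambda = Hom(K_0 Lambda, R)\<close>

text \<open>K_0 of mod-Lambda is the free abelian group on isoclasses modulo short exact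
  sequences, so a group homomorphism K_0 -> R is exactly a real function on objects
  that is constant on isoclasses and additive on short exact sequences.\<close>

definition VLam :: "(('l::ring_1, 'm) rmod \<Rightarrow> real) set" where
  "VLam = {\<theta>. (\<forall>M N. fgmod M \<and> fgmod N \<and> is_iso M N \<longrightarrow> \<theta> M = \<theta> N) \<and>
      (\<forall>A B C f g. fgmod A \<and> fgmod B \<and> fgmod C \<and> is_ses A B C f g \<longrightarrow> \<theta> B = \<theta> A + \<theta> C)}"

definition Pcl :: "('l::ring_1, 'm) rmod set \<Rightarrow> (('l, 'm) rmod \<Rightarrow> real) \<Rightarrow> ('l, 'm) rmod set" where
  "Pcl \<G> \<theta> = {M \<in> \<G>. is_zero M \<or>
      (\<forall>M''. strict_quot \<G> M M'' \<and> \<not> is_zero M'' \<longrightarrow> \<theta> M'' > 0)}"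

definition Qcl :: "('l::ring_1, 'm) rmod set \<Rightarrow> (('l, 'm) rmod \<Rightarrow> real) \<Rightarrow> ('l, 'm) rmod set" where
  "Qcl \<G> \<theta> = {N \<in> \<G>. is_zero N \<or>
      (\<forall>N'. strict_subobj \<G> N N' \<and> \<not> is_zero (subm N N') \<longrightarrow> \<theta> (subm N N') < 0)}"

definition Qbar :: "('l::ring_1, 'm) rmod set \<Rightarrow> (('l, 'm) rmod \<Rightarrow> real) \<Rightarrow> ('l, 'm) rmod set" where
  "Qbar \<G> \<theta> = {N \<in> \<G>. \<forall>N'. strict_subobj \<G> N N' \<longrightarrow> \<theta> (subm N N') \<le> 0}"

definition DG :: "('l::ring_1, 'm) rmod set \<Rightarrow> ('l, 'm) rmod \<Rightarrow> (('l, 'm) rmod \<Rightarrow> real) set" where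
  "DG \<G> M = {\<theta> \<in> VLam. \<theta> M = 0 \<and> (\<forall>M'. strict_subobj \<G> M M' \<longrightarrow> \<theta> (subm M M') \<le> 0)}"

definition Wcl :: "('l::ring_1, 'm) rmod set \<Rightarrow> (('l, 'm) rmod \<Rightarrow> real) \<Rightarrow> ('l, 'm) rmod set" where
  "Wcl \<G> \<theta> = {X \<in> \<G>. \<theta> \<in> DG \<G> X}"

end

(* A strict morphism
   f : X -> Y with X in P(theta) and Y in Qbar(theta) vanishes, because its image is at the same
   time a strict quotient of X (so theta > 0 unless it is zero) and a strict subobject of Y (so
   theta <= 0).  Conversely, finitely generated modules over a finite dimensional algebra have
   finite length, so extremal strict subobjects exist.  If Y is not in Qbar(theta), a minimal
   strict subobject N of Y with theta(N) > 0 lies in P(theta), and the inclusion N -> Y is a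
   nonzero strict morphism.  If X is not in P(theta), a maximal proper strict subobject A with
   theta(A) >= theta(X) gives a quotient X/A in Qbar(theta), and the projection X -> X/A is a
   nonzero strict morphism.  Finally, a nonzero strict subobject N' of N in Qbar(theta) with
   theta(N') = 0 has theta in D(N'), so it lies in W(theta); hence Qbar(theta) = Q(theta) when
   W(theta) is trivial. *)

theory Submission
  imports Defs "HOL-Library.Function_Algebras"
begin

section \<open>Right modules\<close>

lemma rmod_zero_closed: "is_rmod M \<Longrightarrow> mzero M \<in> mcar M"
  by (simp add: is_rmod_def)

lemma rmod_add_closed: "is_rmod M \<Longrightarrow> x \<in> mcar M \<Longrightarrow> y \<in> mcar M \<Longrightarrow> madd M x y \<in> mcar M"
  by (simp add: is_rmod_def)

lemma rmod_act_closed: "is_rmod M \<Longrightarrow> x \<in> mcar M \<Longrightarrow> mact M x a \<in> mcar M"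
  by (simp add: is_rmod_def)

lemma rmod_add_assoc:
  "is_rmod M \<Longrightarrow> x \<in> mcar M \<Longrightarrow> y \<in> mcar M \<Longrightarrow> z \<in> mcar M \<Longrightarrow>
   madd M (madd M x y) z = madd M x (madd M y z)"
  unfolding is_rmod_def by blast

lemma rmod_add_commute: "is_rmod M \<Longrightarrow> x \<in> mcar M \<Longrightarrow> y \<in> mcar M \<Longrightarrow> madd M x y = madd M y x"
  unfolding is_rmod_def by blast

lemma rmod_add_left_commute:
  "is_rmod M \<Longrightarrow> x \<in> mcar M \<Longrightarrow> y \<in> mcar M \<Longrightarrow> z \<in> mcar M \<Longrightarrow>
   madd M x (madd M y z) = madd M y (madd M x z)"
  by (metis rmod_add_assoc rmod_add_commute)

lemma rmod_add_zero_left: "is_rmod M \<Longrightarrow> x \<in> mcar M \<Longrightarrow> madd M (mzero M) x = x"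
  unfolding is_rmod_def by blast

lemma rmod_add_zero_right: "is_rmod M \<Longrightarrow> x \<in> mcar M \<Longrightarrow> madd M x (mzero M) = x"
  by (metis rmod_add_commute rmod_add_zero_left rmod_zero_closed)

lemma rmod_add_inverse: "is_rmod M \<Longrightarrow> x \<in> mcar M \<Longrightarrow> \<exists>y\<in>mcar M. madd M x y = mzero M"
  unfolding is_rmod_def by blast

lemma rmod_act_add_left:
  "is_rmod M \<Longrightarrow> x \<in> mcar M \<Longrightarrow> y \<in> mcar M \<Longrightarrow>
   mact M (madd M x y) a = madd M (mact M x a) (mact M y a)"
  by (simp add: is_rmod_def)

lemma rmod_act_add_right:
  "is_rmod M \<Longrightarrow> x \<in> mcar M \<Longrightarrow> mact M x (a + b) = madd M (mact M x a) (mact M x b)"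
  by (simp add: is_rmod_def)

lemma rmod_act_mult: "is_rmod M \<Longrightarrow> x \<in> mcar M \<Longrightarrow> mact M x (a * b) = mact M (mact M x a) b"
  by (simp add: is_rmod_def)

lemma rmod_act_one: "is_rmod M \<Longrightarrow> x \<in> mcar M \<Longrightarrow> mact M x 1 = x"
  by (simp add: is_rmod_def)

lemma rmod_add_left_cancel:
  assumes M: "is_rmod M" and x: "x \<in> mcar M" and y: "y \<in> mcar M" and z: "z \<in> mcar M"
    and eq: "madd M x y = madd M x z"
  shows "y = z"
proof -
  obtain x' where x': "x' \<in> mcar M" "madd M x x' = mzero M"
    using rmod_add_inverse[OF M x] by blast
  have "y = madd M x' (madd M x y)"
    using M x y x' by (simp add: rmod_add_assoc[symmetric] rmod_add_commute[of M x'] rmod_add_zero_left)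
  also have "\<dots> = z"
    using M x z x' eq by (simp add: rmod_add_assoc[symmetric] rmod_add_commute[of M x'] rmod_add_zero_left)
  finally show ?thesis .
qed

lemma rmod_add_idem_imp_zero: "is_rmod M \<Longrightarrow> x \<in> mcar M \<Longrightarrow> madd M x x = x \<Longrightarrow> x = mzero M"
  by (rule rmod_add_left_cancel[of M x x "mzero M"]) (simp_all add: rmod_zero_closed rmod_add_zero_right)

lemma rmod_act_zero_right:
  assumes M: "is_rmod M" and x: "x \<in> mcar M" shows "mact M x 0 = mzero M"
  using rmod_add_idem_imp_zero[OF M rmod_act_closed[OF M x]] rmod_act_add_right[OF M x, of 0 0]
  by simp

lemma rmod_act_zero_left: assumes M: "is_rmod M" shows "mact M (mzero M) a = mzero M"
  using rmod_add_idem_imp_zero[OF M rmod_act_closed[OF M rmod_zero_closed[OF M]]]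
    rmod_act_add_left[OF M rmod_zero_closed[OF M] rmod_zero_closed[OF M]]
    rmod_add_zero_left[OF M rmod_zero_closed[OF M]]
  by simp

lemma rmod_add_act_minus_one:
  assumes M: "is_rmod M" and x: "x \<in> mcar M" shows "madd M x (mact M x (-1)) = mzero M"
  using rmod_act_add_right[OF M x, of 1 "-1"] by (simp add: rmod_act_one[OF M x] rmod_act_zero_right[OF M x])

lemma hom_closed: "is_hom M N f \<Longrightarrow> x \<in> mcar M \<Longrightarrow> f x \<in> mcar N"
  by (simp add: is_hom_def)

lemma hom_add: "is_hom M N f \<Longrightarrow> x \<in> mcar M \<Longrightarrow> y \<in> mcar M \<Longrightarrow> f (madd M x y) = madd N (f x) (f y)"
  by (simp add: is_hom_def)

lemma hom_act: "is_hom M N f \<Longrightarrow> x \<in> mcar M \<Longrightarrow> f (mact M x a) = mact N (f x) a"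
  by (simp add: is_hom_def)

lemma hom_zero: "is_rmod M \<Longrightarrow> is_rmod N \<Longrightarrow> is_hom M N f \<Longrightarrow> f (mzero M) = mzero N"
  using rmod_add_idem_imp_zero[of N "f (mzero M)"] hom_add[of M N f "mzero M" "mzero M"]
  by (simp add: hom_closed rmod_zero_closed rmod_add_zero_left)

lemma rmod_hom_image:
  assumes X: "is_rmod X" and h: "is_hom X Q p" and onto: "p ` mcar X = mcar Q"
    and zero: "mzero Q = p (mzero X)"
  shows "is_rmod Q"
proof -
  have add: "madd Q (p x) (p y) = p (madd X x y)" if "x \<in> mcar X" "y \<in> mcar X" for x y
    using that hom_add[OF h] by simp
  have act: "mact Q (p x) a = p (mact X x a)" if "x \<in> mcar X" for x a
    using that hom_act[OF h] by simp
  have inv: "\<exists>y\<in>mcar X. madd Q (p x) (p y) = p (mzero X)" if "x \<in> mcar X" for x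
    using rmod_add_inverse[OF X that] add[OF that] by metis
  have all: "(\<forall>q\<in>mcar Q. P q) \<longleftrightarrow> (\<forall>x\<in>mcar X. P (p x))" for P
    by (simp add: onto[symmetric])
  have ex: "(\<exists>q\<in>mcar Q. P q) \<longleftrightarrow> (\<exists>x\<in>mcar X. P (p x))" for P
    by (simp add: onto[symmetric])
  show ?thesis
    unfolding is_rmod_def all ex zero
    using inv by (simp add: X add act rmod_add_closed rmod_act_closed rmod_zero_closed
        rmod_add_assoc rmod_add_commute[OF X] rmod_add_zero_left rmod_act_add_left rmod_act_add_right
        rmod_act_mult rmod_act_one flip: onto)
qed

lemma subm_simps [simp]:
  "mcar (subm M N) = N" "madd (subm M N) = madd M" "mzero (subm M N) = mzero M"
  "mact (subm M N) = mact M" "subm (subm M N) K = subm M K" "subm M (mcar M) = M"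
  by (simp_all add: subm_def)

lemma submod_subset: "is_submod M N \<Longrightarrow> N \<subseteq> mcar M"
  by (simp add: is_submod_def)

lemma submod_zero_closed: "is_submod M N \<Longrightarrow> mzero M \<in> N"
  by (simp add: is_submod_def)

lemma rmod_subm:
  assumes M: "is_rmod M" and N: "is_submod M N"
  shows "is_rmod (subm M N)"
proof -
  have mem: "x \<in> mcar M" if "x \<in> N" for x
    using submod_subset[OF N] that by blast
  have inv: "\<exists>y\<in>N. madd M x y = mzero M" if "x \<in> N" for x
  proof
    show "mact M x (-1) \<in> N" using N that by (simp add: is_submod_def)
    show "madd M x (mact M x (-1)) = mzero M" using rmod_add_act_minus_one[OF M mem[OF that]] .
  qed
  show ?thesis
    using N inv unfolding is_rmod_def is_submod_def subm_simps
    by (simp add: mem M rmod_add_assoc rmod_add_commute[OF M] rmod_add_zero_left rmod_act_add_left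
        rmod_act_add_right rmod_act_mult rmod_act_one)
qed

lemma submod_carrier: "is_rmod M \<Longrightarrow> is_submod M (mcar M)"
  by (simp add: is_rmod_def is_submod_def)

lemma submod_zero: "is_rmod M \<Longrightarrow> is_submod M {mzero M}"
  by (simp add: is_submod_def rmod_zero_closed rmod_add_zero_left rmod_act_zero_left)

lemma submod_trans: "is_submod M N \<Longrightarrow> is_submod (subm M N) K \<Longrightarrow> is_submod M K"
  by (auto simp: is_submod_def)

lemma submod_subm: "is_submod M K \<Longrightarrow> K \<subseteq> N \<Longrightarrow> is_submod (subm M N) K"
  by (auto simp: is_submod_def)

lemma submod_Int: "is_submod M A \<Longrightarrow> is_submod M B \<Longrightarrow> is_submod M (A \<inter> B)"
  by (auto simp: is_submod_def)

lemma rspan_submod: "is_rmod M \<Longrightarrow> S \<subseteq> mcar M \<Longrightarrow> is_submod M (rspan M S)"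
  unfolding rspan_def using submod_carrier[of M] by (auto simp: is_submod_def)

lemma rspan_least: "is_submod M N \<Longrightarrow> S \<subseteq> N \<Longrightarrow> rspan M S \<subseteq> N"
  unfolding rspan_def by auto

lemma rspan_superset: "S \<subseteq> rspan M S"
  unfolding rspan_def by auto

lemma rspan_mono: "S \<subseteq> T \<Longrightarrow> rspan M S \<subseteq> rspan M T"
  unfolding rspan_def by auto

lemma rspan_subm:
  assumes M: "is_rmod M" and N: "is_submod M N" and S: "S \<subseteq> N"
  shows "rspan (subm M N) S = rspan M S"
proof
  have "is_submod M (rspan M S)"
    using rspan_submod[OF M] S submod_subset[OF N] by blast
  then show "rspan (subm M N) S \<subseteq> rspan M S"
    by (intro rspan_least submod_subm rspan_least[OF N S] rspan_superset)
  show "rspan M S \<subseteq> rspan (subm M N) S"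
    unfolding rspan_def[of "subm M N"] using submod_trans[OF N] rspan_least by blast
qed

lemma hom_image_submod:
  assumes X: "is_rmod X" and Q: "is_rmod Q" and h: "is_hom X Q p" and B: "is_submod X B"
  shows "is_submod Q (p ` B)"
proof -
  have BX: "B \<subseteq> mcar X" by (rule submod_subset[OF B])
  have "mzero Q \<in> p ` B"
    using hom_zero[OF X Q h] submod_zero_closed[OF B] by force
  moreover have "madd Q (p a) (p b) \<in> p ` B" if "a \<in> B" "b \<in> B" for a b
    using that B BX hom_add[OF h, of a b, symmetric] by (auto simp: is_submod_def)
  moreover have "mact Q (p a) c \<in> p ` B" if "a \<in> B" for a c
    using that B BX hom_act[OF h, of a c, symmetric] by (auto simp: is_submod_def)
  ultimately show ?thesis
    using BX hom_closed[OF h] unfolding is_submod_def by blast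
qed

lemma hom_preimage_submod:
  assumes X: "is_rmod X" and Q: "is_rmod Q" and h: "is_hom X Q p" and S: "is_submod Q S"
  shows "is_submod X {x \<in> mcar X. p x \<in> S}"
  using S hom_zero[OF X Q h] unfolding is_submod_def
  by (simp add: X hom_add[OF h] hom_act[OF h] rmod_zero_closed rmod_add_closed rmod_act_closed)

lemma hom_subm: "is_hom X Q p \<Longrightarrow> B \<subseteq> mcar X \<Longrightarrow> p ` B \<subseteq> S \<Longrightarrow> is_hom (subm X B) (subm Q S) p"
  unfolding is_hom_def subm_simps by (meson image_subset_iff subsetD)

lemma hker_subm: "B \<subseteq> mcar X \<Longrightarrow> hker (subm X B) (subm Q S) p = B \<inter> hker X Q p"
  unfolding hker_def by auto

lemma hker_subset_hom_preimage: "is_submod Q S \<Longrightarrow> hker X Q p \<subseteq> {x \<in> mcar X. p x \<in> S}"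
  unfolding hker_def using submod_zero_closed by fastforce

lemma is_ses_subm:
  assumes AB: "A \<subseteq> B" and g: "is_hom (subm X B) C g"
    and onto: "g ` B = mcar C" and ker: "hker (subm X B) C g = A"
  shows "is_ses (subm X A) (subm X B) C id g"
  using assms unfolding is_ses_def is_hom_def by auto

lemma zero_if_hker_eq_carrier:
  assumes C: "is_rmod C" and onto: "g ` mcar X = mcar C" and ker: "hker X C g = mcar X"
  shows "is_zero C"
proof -
  have "\<forall>x\<in>mcar X. g x = mzero C" using ker unfolding hker_def by blast
  then have "mcar C \<subseteq> {mzero C}" by (auto simp flip: onto)
  then show ?thesis using rmod_zero_closed[OF C] unfolding is_zero_def by blast
qed

section \<open>Quotient modules\<close>

definition mdiff :: "('l::ring_1, 'm) rmod \<Rightarrow> 'm \<Rightarrow> 'm \<Rightarrow> 'm" where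
  "mdiff X x y = madd X x (mact X y (-1))"

definition quot_rel :: "('l::ring_1, 'm) rmod \<Rightarrow> 'm set \<Rightarrow> 'm \<Rightarrow> 'm \<Rightarrow> bool" where
  "quot_rel X A x y \<longleftrightarrow> x \<in> mcar X \<and> y \<in> mcar X \<and> mdiff X x y \<in> A"

text \<open>The quotient X/A is realised on a chosen set of coset representatives inside the carrier
  of X, so it needs no room in the universe type 'm.\<close>

definition quot_rep :: "('l::ring_1, 'm) rmod \<Rightarrow> 'm set \<Rightarrow> 'm \<Rightarrow> 'm" where
  "quot_rep X A x = (SOME y. quot_rel X A x y)"

definition quotm :: "('l::ring_1, 'm) rmod \<Rightarrow> 'm set \<Rightarrow> ('l, 'm) rmod" where
  "quotm X A = \<lparr>mcar = quot_rep X A ` mcar X, madd = (\<lambda>a b. quot_rep X A (madd X a b)),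
     mzero = quot_rep X A (mzero X), mact = (\<lambda>a r. quot_rep X A (mact X a r))\<rparr>"

context
  fixes X :: "('l::ring_1, 'm) rmod" and A :: "'m set"
  assumes X: "is_rmod X" and A: "is_submod X A"
begin

private lemma neg_closed: "x \<in> mcar X \<Longrightarrow> mact X x (-1) \<in> mcar X"
  using rmod_act_closed[OF X] by blast

private lemma mdiff_swap: "x \<in> mcar X \<Longrightarrow> y \<in> mcar X \<Longrightarrow> mact X (mdiff X x y) (-1) = mdiff X y x"
  unfolding mdiff_def
  by (simp add: rmod_act_add_left[OF X] neg_closed rmod_act_mult[OF X, symmetric] rmod_act_one[OF X]
      rmod_add_commute[OF X] rmod_act_closed[OF X])

private lemma mdiff_add:
  assumes x: "x \<in> mcar X" and y: "y \<in> mcar X" and z: "z \<in> mcar X"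
  shows "madd X (mdiff X x y) (mdiff X y z) = mdiff X x z"
proof -
  have "madd X (mdiff X x y) (mdiff X y z) =
      madd X x (madd X (madd X (mact X y (-1)) y) (mact X z (-1)))"
    unfolding mdiff_def using x y z neg_closed by (simp add: rmod_add_assoc[OF X] rmod_add_closed[OF X])
  also have "\<dots> = mdiff X x z" unfolding mdiff_def
    using rmod_add_act_minus_one[OF X y] rmod_add_commute[OF X y neg_closed[OF y]]
      rmod_add_zero_left[OF X neg_closed[OF z]]
    by simp
  finally show ?thesis .
qed

lemma quot_rel_refl: "x \<in> mcar X \<Longrightarrow> quot_rel X A x x"
  unfolding quot_rel_def mdiff_def using rmod_add_act_minus_one[OF X] submod_zero_closed[OF A] by simp

lemma quot_rel_sym: "quot_rel X A x y \<Longrightarrow> quot_rel X A y x"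
  unfolding quot_rel_def using mdiff_swap A by (metis is_submod_def)

lemma quot_rel_trans: "quot_rel X A x y \<Longrightarrow> quot_rel X A y z \<Longrightarrow> quot_rel X A x z"
  unfolding quot_rel_def using mdiff_add A by (metis is_submod_def)

lemma quot_rel_rep: "x \<in> mcar X \<Longrightarrow> quot_rel X A x (quot_rep X A x)"
  unfolding quot_rep_def by (rule someI[of _ x], rule quot_rel_refl)

lemma quot_rep_closed: "x \<in> mcar X \<Longrightarrow> quot_rep X A x \<in> mcar X"
  using quot_rel_rep quot_rel_def by metis

lemma quot_rep_eq_iff:
  assumes "x \<in> mcar X" "y \<in> mcar X"
  shows "quot_rep X A x = quot_rep X A y \<longleftrightarrow> quot_rel X A x y"
proof
  show "quot_rep X A x = quot_rep X A y \<Longrightarrow> quot_rel X A x y"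
    using quot_rel_rep[OF assms(1)] quot_rel_rep[OF assms(2)] quot_rel_sym quot_rel_trans by metis
  assume "quot_rel X A x y"
  then have "quot_rel X A x = quot_rel X A y"
    using quot_rel_sym quot_rel_trans by blast
  then show "quot_rep X A x = quot_rep X A y" unfolding quot_rep_def by simp
qed

lemma quot_rel_add:
  assumes r: "quot_rel X A x x'" and s: "quot_rel X A y y'"
  shows "quot_rel X A (madd X x y) (madd X x' y')"
proof -
  have c: "x \<in> mcar X" "x' \<in> mcar X" "y \<in> mcar X" "y' \<in> mcar X"
    using r s by (simp_all add: quot_rel_def)
  have "mdiff X (madd X x y) (madd X x' y') = madd X (mdiff X x x') (mdiff X y y')"
    unfolding mdiff_def using c neg_closed
    by (simp add: rmod_act_add_left[OF X] rmod_add_assoc[OF X] rmod_add_left_commute[OF X]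
        rmod_add_closed[OF X] rmod_act_closed[OF X])
  then show ?thesis using r s A c rmod_add_closed[OF X] unfolding quot_rel_def is_submod_def by simp
qed

lemma quot_rel_act: "quot_rel X A x x' \<Longrightarrow> quot_rel X A (mact X x a) (mact X x' a)"
proof -
  assume r: "quot_rel X A x x'"
  then have c: "x \<in> mcar X" "x' \<in> mcar X" by (simp_all add: quot_rel_def)
  have "mdiff X (mact X x a) (mact X x' a) = mact X (mdiff X x x') a"
    unfolding mdiff_def using c neg_closed
    by (simp add: rmod_act_add_left[OF X] rmod_act_mult[OF X, symmetric])
  then show ?thesis using r A c rmod_act_closed[OF X] unfolding quot_rel_def is_submod_def by simp
qed

lemma quot_hom: "is_hom X (quotm X A) (quot_rep X A)"
  unfolding is_hom_def quotm_def
  using quot_rep_eq_iff quot_rep_closed quot_rel_rep quot_rel_add quot_rel_act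
    rmod_add_closed[OF X] rmod_act_closed[OF X]
  by simp

lemma quot_onto: "quot_rep X A ` mcar X = mcar (quotm X A)"
  by (simp add: quotm_def)

lemma rmod_quot: "is_rmod (quotm X A)"
  by (rule rmod_hom_image[OF X quot_hom quot_onto]) (simp add: quotm_def)

lemma hker_quot: "hker X (quotm X A) (quot_rep X A) = A"
proof -
  have "quot_rep X A x = quot_rep X A (mzero X) \<longleftrightarrow> x \<in> A" if "x \<in> mcar X" for x
    using quot_rep_eq_iff[OF that rmod_zero_closed[OF X]] that
    unfolding quot_rel_def mdiff_def
    by (simp add: rmod_zero_closed[OF X] rmod_act_zero_left[OF X] rmod_add_zero_right[OF X])
  then show ?thesis unfolding hker_def using submod_subset[OF A] by (auto simp: quotm_def)
qed

end

section \<open>Finite length of finitely generated modules\<close>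

lemma fd_algebra_add: "fd_algebra \<iota> \<Longrightarrow> \<iota> (a + b) = \<iota> a + \<iota> b"
  unfolding fd_algebra_def by blast

lemma fd_algebra_mult: "fd_algebra \<iota> \<Longrightarrow> \<iota> (a * b) = \<iota> a * \<iota> b"
  unfolding fd_algebra_def by blast

lemma fd_algebra_central: "fd_algebra \<iota> \<Longrightarrow> \<iota> a * x = x * \<iota> a"
  unfolding fd_algebra_def by blast

lemma fd_algebra_zero: "fd_algebra \<iota> \<Longrightarrow> \<iota> 0 = 0"
  using fd_algebra_add[of \<iota> 0 0] by simp

lemma fd_algebra_spanning_set:
  assumes "fd_algebra \<iota>"
  obtains T c where "finite T" "\<And>x. x = (\<Sum>t\<in>T. \<iota> (c x t) * t)"
proof -
  obtain T where "finite T" "\<forall>x. \<exists>c. x = (\<Sum>t\<in>T. \<iota> (c t) * t)"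
    using assms unfolding fd_algebra_def by blast
  with that show ?thesis by metis
qed

primrec lincomb :: "('l::ring_1, 'm) rmod \<Rightarrow> ('k \<Rightarrow> 'l) \<Rightarrow> 'm list \<Rightarrow> ('m \<Rightarrow> 'k) \<Rightarrow> 'm" where
  "lincomb M \<iota> [] f = mzero M"
| "lincomb M \<iota> (u # us) f = madd M (mact M u (\<iota> (f u))) (lincomb M \<iota> us f)"

lemma lincomb_cong: "(\<And>u. u \<in> set xs \<Longrightarrow> f u = g u) \<Longrightarrow> lincomb M \<iota> xs f = lincomb M \<iota> xs g"
  by (induction xs) auto

context
  fixes M :: "('l::ring_1, 'm) rmod" and \<iota> :: "'k::field \<Rightarrow> 'l"
  assumes M: "is_rmod M" and fd: "fd_algebra \<iota>"
begin

lemma lincomb_closed: "set xs \<subseteq> mcar M \<Longrightarrow> lincomb M \<iota> xs f \<in> mcar M"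
  by (induction xs) (auto simp: M rmod_zero_closed rmod_add_closed rmod_act_closed)

lemma lincomb_add:
  "set xs \<subseteq> mcar M \<Longrightarrow> lincomb M \<iota> xs (\<lambda>x. f x + g x) = madd M (lincomb M \<iota> xs f) (lincomb M \<iota> xs g)"
proof (induction xs)
  case Nil
  then show ?case by (simp add: M rmod_add_zero_left rmod_zero_closed)
next
  case (Cons u us)
  then have u: "u \<in> mcar M" and us: "set us \<subseteq> mcar M" by auto
  show ?case
    using Cons.IH[OF us] u lincomb_closed[OF us]
    by (simp add: fd_algebra_add[OF fd] rmod_act_add_right[OF M u] rmod_act_closed[OF M]
        rmod_add_assoc[OF M] rmod_add_left_commute[OF M] rmod_add_closed[OF M])
qed

lemma lincomb_scale: "set xs \<subseteq> mcar M \<Longrightarrow> lincomb M \<iota> xs (\<lambda>x. c * f x) = mact M (lincomb M \<iota> xs f) (\<iota> c)"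
proof (induction xs)
  case Nil
  then show ?case by (simp add: rmod_act_zero_left[OF M])
next
  case (Cons u us)
  then have u: "u \<in> mcar M" and us: "set us \<subseteq> mcar M" by auto
  have "mact M u (\<iota> (c * f u)) = mact M (mact M u (\<iota> (f u))) (\<iota> c)"
    using rmod_act_mult[OF M u] fd_algebra_mult[OF fd] fd_algebra_central[OF fd] by metis
  then show ?case
    using Cons.IH[OF us] by (simp add: rmod_act_add_left[OF M] rmod_act_closed[OF M u] lincomb_closed[OF us])
qed

lemma lincomb_zero: "set xs \<subseteq> mcar M \<Longrightarrow> lincomb M \<iota> xs (\<lambda>x. 0) = mzero M"
  by (induction xs)
    (auto simp: fd_algebra_zero[OF fd] rmod_act_zero_right[OF M] rmod_add_zero_left[OF M] rmod_zero_closed[OF M])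

lemma lincomb_single:
  "set xs \<subseteq> mcar M \<Longrightarrow> distinct xs \<Longrightarrow> u \<in> set xs \<Longrightarrow>
   lincomb M \<iota> xs (\<lambda>x. if x = u then c else 0) = mact M u (\<iota> c)"
proof (induction xs)
  case (Cons v vs)
  then have v: "v \<in> mcar M" and vs: "set vs \<subseteq> mcar M" "distinct vs" "v \<notin> set vs" by auto
  have "lincomb M \<iota> vs (\<lambda>x. if x = v then c else 0) = mzero M"
    using lincomb_zero[OF vs(1)] lincomb_cong[of vs "\<lambda>x. if x = v then c else 0" "\<lambda>x. 0"] vs(3) by metis
  then show ?case
    using Cons vs v
    by (auto simp: fd_algebra_zero[OF fd] rmod_act_zero_right[OF M] rmod_add_zero_left[OF M]
        rmod_add_zero_right[OF M] rmod_act_closed[OF M] lincomb_closed)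
qed simp

lemma lincomb_range_add:
  assumes xs: "set xs \<subseteq> mcar M"
    and "x \<in> range (lincomb M \<iota> xs)" "y \<in> range (lincomb M \<iota> xs)"
  shows "madd M x y \<in> range (lincomb M \<iota> xs)"
proof -
  obtain f g where "x = lincomb M \<iota> xs f" "y = lincomb M \<iota> xs g" using assms(2,3) by blast
  then have "madd M x y = lincomb M \<iota> xs (\<lambda>u. f u + g u)" by (simp add: lincomb_add[OF xs])
  then show ?thesis by simp
qed

lemma lincomb_range_submod:
  assumes xs: "set xs \<subseteq> mcar M"
    and act: "\<And>u a. u \<in> set xs \<Longrightarrow> mact M u a \<in> range (lincomb M \<iota> xs)"
  shows "is_submod M (range (lincomb M \<iota> xs))"
proof -
  let ?I = "range (lincomb M \<iota> xs)"
  have zero: "mzero M \<in> ?I"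
    using lincomb_zero[OF xs] by (metis rangeI)
  have "mact M (lincomb M \<iota> ys f) a \<in> ?I" if "set ys \<subseteq> set xs" for ys f a
    using that
  proof (induction ys)
    case Nil
    then show ?case using zero by (simp add: rmod_act_zero_left[OF M])
  next
    case (Cons u us)
    then have u: "u \<in> mcar M" and us: "set us \<subseteq> mcar M" using xs by auto
    have "mact M (lincomb M \<iota> (u # us) f) a =
        madd M (mact M u (\<iota> (f u) * a)) (mact M (lincomb M \<iota> us f) a)"
      by (simp add: rmod_act_add_left[OF M] rmod_act_closed[OF M u] lincomb_closed[OF us]
          rmod_act_mult[OF M u])
    then show ?case using Cons act lincomb_range_add[OF xs] by simp
  qed
  then have "mact M x a \<in> ?I" if "x \<in> ?I" for x a
    using that by blast
  moreover have "?I \<subseteq> mcar M" using lincomb_closed[OF xs] by blast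
  ultimately show ?thesis
    using zero lincomb_range_add[OF xs] unfolding is_submod_def by blast
qed

lemma lincomb_range_act_products:
  assumes xs: "set xs = (\<lambda>(s, t). mact M s t) ` (S \<times> T)" "distinct xs" and S: "S \<subseteq> mcar M"
    and T: "finite T" "\<And>x. x = (\<Sum>t\<in>T. \<iota> (c x t) * t)" and s: "s \<in> S"
  shows "mact M s b \<in> range (lincomb M \<iota> xs)"
proof -
  have sM: "s \<in> mcar M" using s S by auto
  have xsM: "set xs \<subseteq> mcar M" using xs(1) S rmod_act_closed[OF M] by auto
  have "mact M s (\<Sum>t\<in>F. \<iota> (c b t) * t) \<in> range (lincomb M \<iota> xs)" if "F \<subseteq> T" for F
    using finite_subset[OF that T(1)] that
  proof (induction F rule: finite_induct)
    case empty
    have "mzero M = lincomb M \<iota> xs (\<lambda>_. 0)" by (simp add: lincomb_zero[OF xsM])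
    then show ?case by (simp add: rmod_act_zero_right[OF M sM])
  next
    case (insert t F)
    have "mact M s (\<iota> (c b t) * t) = mact M (mact M s t) (\<iota> (c b t))"
      using rmod_act_mult[OF M sM] fd_algebra_central[OF fd] by metis
    also have "\<dots> = lincomb M \<iota> xs (\<lambda>x. if x = mact M s t then c b t else 0)"
      using lincomb_single[OF xsM xs(2)] xs(1) s insert.prems by force
    finally show ?case
      using insert lincomb_range_add[OF xsM] by (simp add: rmod_act_add_right[OF M sM])
  qed
  from this[OF order_refl] show ?thesis by (simp only: T(2)[of b, symmetric])
qed

end

lemma lincomb_onto:
  assumes fd: "fd_algebra \<iota>" and fg: "fgmod M"
  obtains xs where "set xs \<subseteq> mcar M" "mcar M \<subseteq> range (lincomb M \<iota> xs)"
proof -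
  have M: "is_rmod M" using fg by (simp add: fgmod_def)
  obtain S where S: "finite S" "S \<subseteq> mcar M" "rspan M S = mcar M"
    using fg by (auto simp: fgmod_def fin_gen_def)
  obtain T c where T: "finite T" "\<And>x. x = (\<Sum>t\<in>T. \<iota> (c x t) * t)"
    using fd_algebra_spanning_set[OF fd] by blast
  have "finite ((\<lambda>(s, t). mact M s t) ` (S \<times> T))"
    by (intro finite_imageI finite_cartesian_product S(1) T(1))
  then obtain xs where xs: "set xs = (\<lambda>(s, t). mact M s t) ` (S \<times> T)" "distinct xs"
    by (meson finite_distinct_list)
  let ?I = "range (lincomb M \<iota> xs)"
  have xsM: "set xs \<subseteq> mcar M" using xs S(2) rmod_act_closed[OF M] by auto
  note gen = lincomb_range_act_products[OF M fd xs S(2) T]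
  have "is_submod M ?I"
  proof (rule lincomb_range_submod[OF M fd xsM])
    fix u a assume "u \<in> set xs"
    then obtain s t where st: "s \<in> S" "u = mact M s t" using xs(1) by auto
    have "mact M s (t * a) \<in> ?I" by (rule gen[OF st(1)])
    then show "mact M u a \<in> ?I" using st S(2) by (auto simp: rmod_act_mult[OF M])
  qed
  moreover have "S \<subseteq> ?I"
    using gen[of _ 1] rmod_act_one[OF M] S(2) by (metis subset_iff)
  ultimately have "mcar M \<subseteq> ?I"
    using rspan_least[of M ?I S] S(3) by simp
  with xsM that show ?thesis by blast
qed

lemma sum_fun_apply: "(\<Sum>u\<in>F. g u) x = (\<Sum>u\<in>F. g u x)"
  by (induction F rule: infinite_finite_induct) (simp_all add: plus_fun_def)

lemma (in vector_space) dim_psubset_subspace: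
  assumes S: "subspace S" and ST: "S \<subset> T" and TW: "T \<subseteq> span W" and W: "finite W"
  shows "dim S < dim T"
proof -
  obtain B where B: "B \<subseteq> S" "independent B" "S \<subseteq> span B" "card B = dim S"
    using basis_exists by blast
  obtain C where C: "C \<subseteq> T" "independent C" "T \<subseteq> span C" "card C = dim T"
    using basis_exists by blast
  obtain x where x: "x \<in> T" "x \<notin> S" using ST by blast
  have "span B \<subseteq> S" using B(1) S by (simp add: span_minimal)
  then have "x \<notin> span B" using x(2) by blast
  then have ind: "independent (insert x B)" by (rule independent_insertI[OF _ B(2)])
  have "C \<subseteq> span W" using C(1) TW by (meson subset_trans)
  then have Cfin: "finite C" using independent_span_bound[OF W C(2)] by blast
  have "B \<subseteq> span C" using B(1) ST C(3) by (meson psubset_imp_subset subset_trans)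
  moreover have "x \<in> span C" using x(1) C(3) by (meson subsetD)
  ultimately have "insert x B \<subseteq> span C" by simp
  then have bound: "finite (insert x B) \<and> card (insert x B) \<le> card C"
    by (rule independent_span_bound[OF Cfin ind])
  have "x \<notin> B" using x(2) B(1) by blast
  then have "card (insert x B) = Suc (card B)"
    using bound card_insert_disjoint[of B x] by simp
  then show ?thesis using bound B(4) C(4) by linarith
qed

interpretation fun_vs: vector_space "\<lambda>c (f :: 'a \<Rightarrow> 'k::field) x. c * f x"
  by unfold_locales (simp_all add: fun_eq_iff algebra_simps)

lemma fun_vs_span_indicators:
  assumes "finite U" and "\<And>u. u \<notin> U \<Longrightarrow> f u = 0"
  shows "f \<in> fun_vs.span ((\<lambda>u x. if x = u then (1::'k::field) else 0) ` U)"
proof -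
  let ?W = "(\<lambda>u x. if x = u then (1::'k) else 0) ` U"
  have "(\<Sum>u\<in>U. f u * (if x = u then 1 else 0)) = f x" for x
  proof -
    have "(\<Sum>u\<in>U. f u * (if x = u then 1 else 0)) = (\<Sum>u\<in>U. if x = u then f u else 0)"
      by (rule sum.cong) auto
    then show ?thesis using assms by auto
  qed
  then have "f = (\<Sum>u\<in>U. (\<lambda>x. f u * (if x = u then 1 else 0)))"
    by (simp add: fun_eq_iff sum_fun_apply)
  also have "\<dots> \<in> fun_vs.span ?W"
  proof (rule fun_vs.span_sum)
    fix u assume "u \<in> U"
    then have "(\<lambda>x. if x = u then 1 else 0) \<in> fun_vs.span ?W"
      by (intro fun_vs.span_base) auto
    then show "(\<lambda>x. f u * (if x = u then 1 else 0)) \<in> fun_vs.span ?W"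
      using fun_vs.span_scale[of _ ?W "f u"] by simp
  qed
  finally show ?thesis .
qed

text \<open>The rank of a submodule N is the dimension, over the ground field, of the
  space of coefficient vectors supported on a fixed finite generating list whose linear combination
  lies in N.\<close>

lemma fgmod_submod_rank:
  fixes \<iota> :: "'k::field \<Rightarrow> 'l::ring_1" and M :: "('l, 'm) rmod"
  assumes fd: "fd_algebra \<iota>" and fg: "fgmod M"
  obtains r :: "'m set \<Rightarrow> nat" and b where "\<And>N. r N \<le> b"
    and "\<And>N N'. is_submod M N \<Longrightarrow> is_submod M N' \<Longrightarrow> N \<subset> N' \<Longrightarrow> r N < r N'"
proof -
  have M: "is_rmod M" using fg by (simp add: fgmod_def)
  obtain xs where xs: "set xs \<subseteq> mcar M" "mcar M \<subseteq> range (lincomb M \<iota> xs)"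
    using lincomb_onto[OF fd fg] by blast
  define W where "W = (\<lambda>u x. if x = u then (1::'k) else 0) ` set xs"
  define P where "P N = {f. (\<forall>u. u \<notin> set xs \<longrightarrow> f u = 0) \<and> lincomb M \<iota> xs f \<in> N}" for N
  have span: "P N \<subseteq> fun_vs.span W" for N
    unfolding P_def W_def using fun_vs_span_indicators[of "set xs"] by blast
  have subspace: "fun_vs.subspace (P N)" if N: "is_submod M N" for N
    using N lincomb_zero[OF M fd xs(1)] lincomb_add[OF M fd xs(1)] lincomb_scale[OF M fd xs(1)]
    unfolding fun_vs.subspace_def P_def is_submod_def by (simp add: zero_fun_def plus_fun_def)
  show ?thesis
  proof
    show "fun_vs.dim (P N) \<le> card W" for N
      using fun_vs.dim_le_card[OF span] W_def by simp
  next
    fix N N' assume N: "is_submod M N" and N': "is_submod M N'" and NN': "N \<subset> N'"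
    obtain x where x: "x \<in> N'" "x \<notin> N" using NN' by blast
    then obtain f where f: "lincomb M \<iota> xs f = x" using xs(2) submod_subset[OF N'] by blast
    define g where "g u = (if u \<in> set xs then f u else 0)" for u
    have "lincomb M \<iota> xs g = x" unfolding f[symmetric] g_def by (rule lincomb_cong) simp
    then have "g \<in> P N'" "g \<notin> P N" using x unfolding P_def g_def by auto
    moreover have "P N \<subseteq> P N'" using NN' unfolding P_def by auto
    ultimately have "P N \<subset> P N'" by blast
    then show "fun_vs.dim (P N) < fun_vs.dim (P N')"
      using fun_vs.dim_psubset_subspace[OF subspace[OF N] _ span] W_def by simp
  qed
qed

lemma fgmod_submod_minimal:
  fixes M :: "('l::ring_1, 'm) rmod" and \<iota> :: "'k::field \<Rightarrow> 'l"
  assumes fd: "fd_algebra \<iota>" and fg: "fgmod M" and N0: "is_submod M N0" "P N0"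
  obtains N where "is_submod M N" "P N" "\<And>N'. is_submod M N' \<Longrightarrow> N' \<subset> N \<Longrightarrow> \<not> P N'"
proof -
  obtain r :: "'m set \<Rightarrow> nat"
    where r: "\<And>N N'. is_submod M N \<Longrightarrow> is_submod M N' \<Longrightarrow> N \<subset> N' \<Longrightarrow> r N < r N'"
    using fgmod_submod_rank[OF fd fg] by metis
  have "\<exists>N. (is_submod M N \<and> P N) \<and> (\<forall>N'. is_submod M N' \<and> P N' \<longrightarrow> r N \<le> r N')"
    using ex_has_least_nat[of "\<lambda>N. is_submod M N \<and> P N" N0 r] N0 by simp
  then obtain N where N: "is_submod M N" "P N" and least: "\<And>N'. is_submod M N' \<Longrightarrow> P N' \<Longrightarrow> r N \<le> r N'"
    by blast
  show thesis
  proof (rule that[OF N])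
    fix N' assume "is_submod M N'" "N' \<subset> N"
    then show "\<not> P N'" using least r[OF _ N(1)] by (meson leD)
  qed
qed

lemma fgmod_submod_maximal:
  fixes M :: "('l::ring_1, 'm) rmod" and \<iota> :: "'k::field \<Rightarrow> 'l"
  assumes fd: "fd_algebra \<iota>" and fg: "fgmod M" and N0: "is_submod M N0" "P N0"
  obtains N where "is_submod M N" "P N" "\<And>N'. is_submod M N' \<Longrightarrow> N \<subset> N' \<Longrightarrow> \<not> P N'"
proof -
  obtain r :: "'m set \<Rightarrow> nat" and b where bound: "\<And>N. r N \<le> b"
    and r: "\<And>N N'. is_submod M N \<Longrightarrow> is_submod M N' \<Longrightarrow> N \<subset> N' \<Longrightarrow> r N < r N'"
    using fgmod_submod_rank[OF fd fg] by blast
  have "\<exists>N. (is_submod M N \<and> P N) \<and> (\<forall>N'. is_submod M N' \<and> P N' \<longrightarrow> r N' \<le> r N)"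
    by (rule ex_has_greatest_nat[where b = "Suc b"]) (use N0 bound in \<open>auto simp: less_Suc_eq_le\<close>)
  then obtain N where N: "is_submod M N" "P N"
    and greatest: "\<And>N'. is_submod M N' \<Longrightarrow> P N' \<Longrightarrow> r N' \<le> r N"
    by blast
  show thesis
  proof (rule that[OF N])
    fix N' assume "is_submod M N'" "N \<subset> N'"
    then show "\<not> P N'" using greatest r[OF N(1)] by (meson leD)
  qed
qed

lemma fgmod_subm:
  fixes M :: "('l::ring_1, 'm) rmod" and \<iota> :: "'k::field \<Rightarrow> 'l"
  assumes fd: "fd_algebra \<iota>" and fg: "fgmod M" and N: "is_submod M N"
  shows "fgmod (subm M N)"
proof -
  have M: "is_rmod M" using fg by (simp add: fgmod_def)
  let ?fg = "\<lambda>K. \<exists>F. finite F \<and> F \<subseteq> N \<and> K = rspan M F"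
  obtain K where "is_submod M K" "?fg K" and Kmax: "\<And>K'. is_submod M K' \<Longrightarrow> K \<subset> K' \<Longrightarrow> \<not> ?fg K'"
  proof (rule fgmod_submod_maximal[OF fd fg, of "rspan M {}" ?fg])
    show "is_submod M (rspan M {})" by (rule rspan_submod[OF M]) simp
    show "?fg (rspan M {})" by blast
  qed (rule that)
  then obtain F where F: "finite F" "F \<subseteq> N" "K = rspan M F" by blast
  have "rspan M F = N"
  proof (rule ccontr)
    assume "rspan M F \<noteq> N"
    moreover have "rspan M F \<subseteq> N" by (rule rspan_least[OF N F(2)])
    ultimately obtain x where x: "x \<in> N" "x \<notin> rspan M F" by blast
    have "rspan M F \<subset> rspan M (insert x F)"
      using rspan_mono[of F "insert x F" M] rspan_superset[of "insert x F" M] x(2) by blast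
    moreover have "is_submod M (rspan M (insert x F))"
      using rspan_submod[OF M] x(1) F(2) submod_subset[OF N] by (meson insert_subset subset_trans)
    moreover have "?fg (rspan M (insert x F))" using F x(1) by blast
    ultimately show False using Kmax F(3) by blast
  qed
  then show ?thesis
    using rmod_subm[OF M N] rspan_subm[OF M N F(2)] F(1,2) unfolding fgmod_def fin_gen_def by auto
qed

lemma fgmod_hom_image:
  assumes X: "fgmod X" and Q: "is_rmod Q" and h: "is_hom X Q p" and onto: "p ` mcar X = mcar Q"
  shows "fgmod Q"
proof -
  have Xm: "is_rmod X" using X by (simp add: fgmod_def)
  obtain S where S: "finite S" "S \<subseteq> mcar X" "rspan X S = mcar X"
    using X by (auto simp: fgmod_def fin_gen_def)
  let ?K = "rspan Q (p ` S)"
  have pS: "p ` S \<subseteq> mcar Q" using S(2) onto by auto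
  have K: "is_submod Q ?K" by (rule rspan_submod[OF Q pS])
  have "S \<subseteq> {x \<in> mcar X. p x \<in> ?K}" using S(2) rspan_superset[of "p ` S" Q] by auto
  then have "rspan X S \<subseteq> {x \<in> mcar X. p x \<in> ?K}"
    by (rule rspan_least[OF hom_preimage_submod[OF Xm Q h K]])
  then have "mcar Q \<subseteq> ?K" using S(3) by (auto simp flip: onto)
  then have "?K = mcar Q" using submod_subset[OF K] by blast
  then show ?thesis unfolding fgmod_def fin_gen_def using Q S(1) pS by blast
qed

section \<open>Strict subobjects in a torsion class\<close>

lemma strict_subobj_submod: "strict_subobj G Y N \<Longrightarrow> is_submod Y N"
  by (simp add: strict_subobj_def subobj_def)

lemma strict_subobj_in: "strict_subobj G Y N \<Longrightarrow> subm Y N \<in> G"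
  by (simp add: strict_subobj_def subobj_def)

lemma strict_subobj_carrier:
  assumes "Q \<in> G" and "is_rmod Q"
  shows "strict_subobj G Q (mcar Q)"
proof -
  have "mcar Q \<inter> B' = B'" if "subobj G Q B'" for B'
    using that submod_subset by (auto simp: subobj_def)
  then show ?thesis
    using assms submod_carrier unfolding strict_subobj_def by (auto simp: subobj_def)
qed

lemma strict_subobj_trans:
  assumes K: "strict_subobj G (subm Y N) K" and N: "strict_subobj G Y N"
  shows "strict_subobj G Y K"
  unfolding strict_subobj_def subobj_def
proof (intro conjI allI impI)
  have KN: "is_submod (subm Y N) K" by (rule strict_subobj_submod[OF K])
  then show "is_submod Y K" by (rule submod_trans[OF strict_subobj_submod[OF N]])
  show "subm Y K \<in> G" using strict_subobj_in[OF K] by simp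
  fix B' assume B': "is_submod Y B' \<and> subm Y B' \<in> G"
  have "subm Y (N \<inter> B') \<in> G" using N B' by (simp add: strict_subobj_def subobj_def)
  moreover have "is_submod (subm Y N) (N \<inter> B')"
    using submod_subm[OF submod_Int[OF strict_subobj_submod[OF N]]] B' by blast
  ultimately have "subm Y (K \<inter> (N \<inter> B')) \<in> G"
    using K by (simp add: strict_subobj_def subobj_def)
  moreover have "K \<inter> (N \<inter> B') = K \<inter> B'" using submod_subset[OF KN] by auto
  ultimately show "subm Y (K \<inter> B') \<in> G" by simp
qed

context
  fixes G :: "('l::ring_1, 'm) rmod set"
  assumes tc: "torsion_class G"
begin

lemma tc_fgmod: "M \<in> G \<Longrightarrow> fgmod M"
  using tc unfolding torsion_class_def by blast

lemma tc_rmod: "M \<in> G \<Longrightarrow> is_rmod M"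
  using tc_fgmod unfolding fgmod_def by blast

lemma tc_zero: "fgmod M \<Longrightarrow> is_zero M \<Longrightarrow> M \<in> G"
  using tc unfolding torsion_class_def by blast

lemma tc_extension: "A \<in> G \<Longrightarrow> C \<in> G \<Longrightarrow> fgmod B \<Longrightarrow> is_ses A B C f g \<Longrightarrow> B \<in> G"
  using tc unfolding torsion_class_def by blast

lemma tc_quotient: "M \<in> G \<Longrightarrow> fgmod N \<Longrightarrow> is_hom M N g \<Longrightarrow> g ` mcar M = mcar N \<Longrightarrow> N \<in> G"
  using tc unfolding torsion_class_def by blast

context
  fixes \<iota> :: "'k::field \<Rightarrow> 'l"
  assumes fd: "fd_algebra \<iota>"
begin

lemma tc_fgmod_subm: "M \<in> G \<Longrightarrow> is_submod M N \<Longrightarrow> fgmod (subm M N)"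
  using fgmod_subm[OF fd] tc_fgmod by blast

lemma strict_subobj_zero:
  assumes Y: "Y \<in> G"
  shows "strict_subobj G Y {mzero Y}"
proof -
  have Z: "is_submod Y {mzero Y}" by (rule submod_zero[OF tc_rmod[OF Y]])
  have ZG: "subm Y {mzero Y} \<in> G"
    using tc_zero tc_fgmod_subm[OF Y Z] by (simp add: is_zero_def)
  have "{mzero Y} \<inter> B' = {mzero Y}" if "subobj G Y B'" for B'
    using that submod_zero_closed by (auto simp: subobj_def)
  then show ?thesis using Z ZG unfolding strict_subobj_def subobj_def by simp
qed

lemma strict_morph_inclusion:
  assumes Y: "Y \<in> G" and N: "strict_subobj G Y N"
  shows "strict_morph G (subm Y N) Y id"
proof -
  have NY: "N \<subseteq> mcar Y" by (rule submod_subset[OF strict_subobj_submod[OF N]])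
  have ker: "hker (subm Y N) Y id = {mzero Y}"
    using submod_zero_closed[OF strict_subobj_submod[OF N]] unfolding hker_def by auto
  have "strict_subobj G (subm Y N) {mzero Y}"
    using strict_subobj_zero[OF strict_subobj_in[OF N]] by simp
  then show ?thesis
    unfolding strict_morph_def ker
    using Y N NY strict_subobj_in[OF N] by (auto simp: is_hom_def strict_subobj_def subobj_def)
qed

lemma quot_in:
  assumes X: "X \<in> G" and A: "is_submod X A"
  shows "quotm X A \<in> G"
proof -
  have Xm: "is_rmod X" by (rule tc_rmod[OF X])
  have "fgmod (quotm X A)"
    by (rule fgmod_hom_image[OF tc_fgmod[OF X] rmod_quot[OF Xm A] quot_hom[OF Xm A] quot_onto[OF Xm A]])
  then show ?thesis by (rule tc_quotient[OF X _ quot_hom[OF Xm A] quot_onto[OF Xm A]])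
qed

lemma strict_morph_quot:
  assumes X: "X \<in> G" and A: "strict_subobj G X A"
  shows "strict_morph G X (quotm X A) (quot_rep X A)"
proof -
  have Xm: "is_rmod X" by (rule tc_rmod[OF X])
  have A': "is_submod X A" by (rule strict_subobj_submod[OF A])
  have "strict_subobj G (quotm X A) (mcar (quotm X A))"
    by (rule strict_subobj_carrier[OF quot_in[OF X A'] rmod_quot[OF Xm A']])
  then show ?thesis
    unfolding strict_morph_def hker_quot[OF Xm A'] quot_onto[OF Xm A']
    using X A quot_in[OF X A'] quot_hom[OF Xm A'] strict_subobj_in[OF A] by simp
qed

text \<open>With B the preimage of S, the intersection B \<inter> B' is an extension of S \<inter> p ` B' by
  A \<inter> B'; both lie in the torsion class because A and S are strict.\<close>

lemma hom_preimage_Int_in: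
  assumes X: "X \<in> G" and Q: "Q \<in> G" and h: "is_hom X Q p" and A: "strict_subobj G X A"
    and ker: "hker X Q p = A" and S: "strict_subobj G Q S" and B': "subobj G X B'"
  shows "subm X ({x \<in> mcar X. p x \<in> S} \<inter> B') \<in> G"
proof -
  let ?B = "{x \<in> mcar X. p x \<in> S}" and ?I = "p ` B'"
  have Xm: "is_rmod X" and Qm: "is_rmod Q" using X Q tc_rmod by auto
  have B'sub: "is_submod X B'" and B'G: "subm X B' \<in> G" using B' by (simp_all add: subobj_def)
  have B'X: "B' \<subseteq> mcar X" by (rule submod_subset[OF B'sub])
  have AB: "A \<subseteq> ?B"
    using hker_subset_hom_preimage[OF strict_subobj_submod[OF S], of X p] ker by simp
  have I: "is_submod Q ?I" by (rule hom_image_submod[OF Xm Qm h B'sub])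
  have "subm Q ?I \<in> G"
    using tc_quotient[OF B'G tc_fgmod_subm[OF Q I] hom_subm[OF h B'X]] by simp
  then have SI: "subm Q (S \<inter> ?I) \<in> G"
    using S I by (simp add: strict_subobj_def subobj_def)
  have AI: "subm X (A \<inter> B') \<in> G" using A B' by (simp add: strict_subobj_def)
  have "is_ses (subm X (A \<inter> B')) (subm X (?B \<inter> B')) (subm Q (S \<inter> ?I)) id p"
  proof (rule is_ses_subm)
    show "A \<inter> B' \<subseteq> ?B \<inter> B'" using AB by blast
    show "is_hom (subm X (?B \<inter> B')) (subm Q (S \<inter> ?I)) p" by (rule hom_subm[OF h]) auto
    show "p ` (?B \<inter> B') = mcar (subm Q (S \<inter> ?I))" using B'X by auto
    show "hker (subm X (?B \<inter> B')) (subm Q (S \<inter> ?I)) p = A \<inter> B'"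
      using hker_subm[of "?B \<inter> B'" X Q "S \<inter> ?I" p] ker AB by auto
  qed
  moreover have "fgmod (subm X (?B \<inter> B'))"
    by (rule tc_fgmod_subm[OF X submod_Int[OF hom_preimage_submod[OF Xm Qm h] B'sub]])
      (rule strict_subobj_submod[OF S])
  ultimately show ?thesis using tc_extension[OF AI SI] by blast
qed

lemma strict_subobj_hom_preimage:
  assumes X: "X \<in> G" and Q: "Q \<in> G" and h: "is_hom X Q p" and A: "strict_subobj G X A"
    and ker: "hker X Q p = A" and S: "strict_subobj G Q S"
  shows "strict_subobj G X {x \<in> mcar X. p x \<in> S}"
proof -
  have Xm: "is_rmod X" and Qm: "is_rmod Q" using X Q tc_rmod by auto
  have "subobj G X (mcar X)" using X submod_carrier[OF Xm] by (simp add: subobj_def)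
  then have "subm X ({x \<in> mcar X. p x \<in> S} \<inter> mcar X) \<in> G"
    by (rule hom_preimage_Int_in[OF X Q h A ker S])
  then show ?thesis
    using hom_preimage_submod[OF Xm Qm h strict_subobj_submod[OF S]] hom_preimage_Int_in[OF X Q h A ker S]
    unfolding strict_subobj_def subobj_def by (simp add: Int_absorb2)
qed

end

end

section \<open>The classes P, Qbar and Q\<close>

lemma VLam_ses:
  "\<theta> \<in> VLam \<Longrightarrow> fgmod A \<Longrightarrow> fgmod B \<Longrightarrow> fgmod C \<Longrightarrow> is_ses A B C f g \<Longrightarrow> \<theta> B = \<theta> A + \<theta> C"
  unfolding VLam_def by blast

lemma VLam_zero:
  assumes \<theta>: "\<theta> \<in> VLam" and Z: "fgmod Z" "is_zero Z"
  shows "\<theta> Z = 0"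
proof -
  have "is_ses Z Z Z id id"
    using Z(2) unfolding is_ses_def is_hom_def hker_def is_zero_def by auto
  then have "\<theta> Z = \<theta> Z + \<theta> Z" using VLam_ses[OF \<theta> Z(1) Z(1) Z(1)] by blast
  then show ?thesis by simp
qed

lemma VLam_hom_onto:
  assumes \<theta>: "\<theta> \<in> VLam" and X: "fgmod X" and C: "fgmod C" and g: "is_hom X C g"
    and onto: "g ` mcar X = mcar C" and K: "fgmod (subm X (hker X C g))"
  shows "\<theta> X = \<theta> (subm X (hker X C g)) + \<theta> C"
proof -
  have "is_ses (subm X (hker X C g)) (subm X (mcar X)) C id g"
    by (rule is_ses_subm) (use g onto in \<open>auto simp: hker_def\<close>)
  then show ?thesis using VLam_ses[OF \<theta> K _ C] X by simp
qed

context
  fixes G :: "('l::ring_1, 'm) rmod set" and \<iota> :: "'k::field \<Rightarrow> 'l" and \<theta> :: "('l, 'm) rmod \<Rightarrow> real"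
  assumes tc: "torsion_class G" and fd: "fd_algebra \<iota>" and \<theta>: "\<theta> \<in> VLam"
begin

lemma strict_morph_Pcl_Qbar_zero:
  assumes X: "X \<in> Pcl G \<theta>" and Y: "Y \<in> Qbar G \<theta>" and f: "strict_morph G X Y f"
    and x: "x \<in> mcar X"
  shows "f x = mzero Y"
proof (rule ccontr)
  assume fx: "f x \<noteq> mzero Y"
  let ?I = "f ` mcar X"
  have I: "strict_subobj G Y ?I" and h: "is_hom X Y f" and ker: "strict_subobj G X (hker X Y f)"
    using f by (simp_all add: strict_morph_def)
  have "mzero Y \<in> ?I" by (rule submod_zero_closed[OF strict_subobj_submod[OF I]])
  then have nonzero: "\<not> is_zero (subm Y ?I)" using fx x by (auto simp: is_zero_def)
  have "\<not> is_zero X"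
  proof
    assume "is_zero X"
    then have "?I = {f x}" using x by (simp add: is_zero_def)
    then show False using \<open>mzero Y \<in> ?I\<close> fx by simp
  qed
  moreover have "strict_quot G X (subm Y ?I)"
    unfolding strict_quot_def
  proof (intro conjI exI[of _ f])
    show "fgmod (subm Y ?I)" by (rule tc_fgmod[OF tc strict_subobj_in[OF I]])
    show "is_hom X (subm Y ?I) f" using h by (simp add: is_hom_def)
    show "strict_subobj G X (hker X (subm Y ?I) f)" using ker by (simp add: hker_def)
  qed simp
  ultimately have "\<theta> (subm Y ?I) > 0" using X nonzero by (simp add: Pcl_def)
  moreover have "\<theta> (subm Y ?I) \<le> 0" using Y I by (simp add: Qbar_def)
  ultimately show False by simp
qed

lemma Pcl_if_minimal:
  assumes Y: "Y \<in> G" and N: "strict_subobj G Y N" and pos: "\<theta> (subm Y N) > 0"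
    and min: "\<And>K. strict_subobj G Y K \<Longrightarrow> K \<subset> N \<Longrightarrow> \<theta> (subm Y K) \<le> 0"
  shows "subm Y N \<in> Pcl G \<theta>"
  unfolding Pcl_def
proof (intro CollectI conjI disjI2 allI impI)
  show NG: "subm Y N \<in> G" by (rule strict_subobj_in[OF N])
  fix M'' assume "strict_quot G (subm Y N) M'' \<and> \<not> is_zero M''"
  then obtain g where M'': "fgmod M''" "\<not> is_zero M''" and g: "is_hom (subm Y N) M'' g"
    and onto: "g ` N = mcar M''" and K: "strict_subobj G (subm Y N) (hker (subm Y N) M'' g)"
    unfolding strict_quot_def by auto
  let ?K = "hker (subm Y N) M'' g"
  have KY: "strict_subobj G Y ?K" by (rule strict_subobj_trans[OF K N])
  have "?K \<noteq> N"
    using zero_if_hker_eq_carrier[of M'' g "subm Y N"] M'' onto by (auto simp: fgmod_def)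
  then have "?K \<subset> N" by (auto simp: hker_def)
  then have "\<theta> (subm Y ?K) \<le> 0" by (rule min[OF KY])
  moreover have "\<theta> (subm Y N) = \<theta> (subm Y ?K) + \<theta> M''"
    using VLam_hom_onto[OF \<theta> tc_fgmod[OF tc NG] M''(1) g] onto tc_fgmod[OF tc strict_subobj_in[OF KY]]
    by simp
  ultimately show "\<theta> M'' > 0" using pos by simp
qed

lemma rperp_Pcl_subset_Qbar: "rperp G (Pcl G \<theta>) \<subseteq> Qbar G \<theta>"
proof
  fix Y assume Yperp: "Y \<in> rperp G (Pcl G \<theta>)"
  then have Y: "Y \<in> G" by (simp add: rperp_def)
  show "Y \<in> Qbar G \<theta>"
  proof (rule ccontr)
    let ?pos = "\<lambda>N. strict_subobj G Y N \<and> \<theta> (subm Y N) > 0"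
    assume "Y \<notin> Qbar G \<theta>"
    then obtain N0 where "strict_subobj G Y N0" "\<not> \<theta> (subm Y N0) \<le> 0"
      using Y unfolding Qbar_def by blast
    then have pos0: "?pos N0" by simp
    obtain N where N: "strict_subobj G Y N" and pos: "\<theta> (subm Y N) > 0"
      and min: "\<And>K. is_submod Y K \<Longrightarrow> K \<subset> N \<Longrightarrow> \<not> ?pos K"
    proof (rule fgmod_submod_minimal[OF fd tc_fgmod[OF tc Y], of N0 ?pos])
      show "is_submod Y N0" using pos0 strict_subobj_submod by blast
      show "?pos N0" by (rule pos0)
    next
      fix N assume "is_submod Y N" "?pos N" "\<And>K. is_submod Y K \<Longrightarrow> K \<subset> N \<Longrightarrow> \<not> ?pos K"
      then show thesis by (intro that) auto
    qed
    have "subm Y N \<in> Pcl G \<theta>"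
    proof (rule Pcl_if_minimal[OF Y N pos])
      fix K assume "strict_subobj G Y K" "K \<subset> N"
      then show "\<theta> (subm Y K) \<le> 0" using min[OF strict_subobj_submod] by fastforce
    qed
    then have "\<forall>x\<in>mcar (subm Y N). id x = mzero Y"
      using Yperp strict_morph_inclusion[OF tc fd Y N] unfolding rperp_def by blast
    then have "N \<subseteq> {mzero Y}" unfolding subm_simps id_apply by blast
    then have "N = {mzero Y}" using submod_zero_closed[OF strict_subobj_submod[OF N]] by blast
    then have "is_zero (subm Y N)" by (simp add: is_zero_def)
    then have "\<theta> (subm Y N) = 0"
      using VLam_zero[OF \<theta>] tc_fgmod[OF tc strict_subobj_in[OF N]] by blast
    then show False using pos by simp
  qed
qed

lemma rperp_Pcl_eq_Qbar: "rperp G (Pcl G \<theta>) = Qbar G \<theta>"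
proof
  show "Qbar G \<theta> \<subseteq> rperp G (Pcl G \<theta>)"
    using strict_morph_Pcl_Qbar_zero by (auto simp: rperp_def Qbar_def)
qed (rule rperp_Pcl_subset_Qbar)

lemma strict_subobj_if_not_Pcl:
  assumes X: "X \<in> G" and nonzero: "\<not> is_zero X" and notP: "X \<notin> Pcl G \<theta>"
  obtains K where "strict_subobj G X K" "K \<noteq> mcar X" "\<theta> X \<le> \<theta> (subm X K)"
proof -
  obtain M'' where "strict_quot G X M''" and M'': "\<not> is_zero M''" "\<theta> M'' \<le> 0"
    using X nonzero notP unfolding Pcl_def by force
  then obtain g where fg: "fgmod M''" and g: "is_hom X M'' g" and onto: "g ` mcar X = mcar M''"
    and K: "strict_subobj G X (hker X M'' g)"
    unfolding strict_quot_def by auto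
  have "hker X M'' g \<noteq> mcar X"
    using zero_if_hker_eq_carrier[OF _ onto] fg M''(1) by (auto simp: fgmod_def)
  moreover have "\<theta> X = \<theta> (subm X (hker X M'' g)) + \<theta> M''"
    using VLam_hom_onto[OF \<theta> tc_fgmod[OF tc X] fg g onto] tc_fgmod[OF tc strict_subobj_in[OF K]] .
  ultimately show thesis using that[OF K] M''(2) by simp
qed

lemma quot_in_Qbar_if_maximal:
  assumes X: "X \<in> G" and A: "strict_subobj G X A" and le: "\<theta> X \<le> \<theta> (subm X A)"
    and max: "\<And>B. strict_subobj G X B \<Longrightarrow> A \<subset> B \<Longrightarrow> B \<noteq> mcar X \<Longrightarrow> \<theta> (subm X B) < \<theta> X"
  shows "quotm X A \<in> Qbar G \<theta>"
  unfolding Qbar_def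
proof (intro CollectI conjI allI impI)
  let ?Q = "quotm X A" and ?p = "quot_rep X A"
  have Xm: "is_rmod X" by (rule tc_rmod[OF tc X])
  have A': "is_submod X A" by (rule strict_subobj_submod[OF A])
  show Q: "?Q \<in> G" by (rule quot_in[OF tc fd X A'])
  fix S assume S: "strict_subobj G ?Q S"
  let ?B = "{x \<in> mcar X. ?p x \<in> S}"
  have h: "is_hom X ?Q ?p" and onto: "?p ` mcar X = mcar ?Q" and ker: "hker X ?Q ?p = A"
    using quot_hom[OF Xm A'] quot_onto[OF Xm A'] hker_quot[OF Xm A'] .
  have B: "strict_subobj G X ?B"
    by (rule strict_subobj_hom_preimage[OF tc fd X Q h A ker S])
  have AB: "A \<subseteq> ?B"
    using hker_subset_hom_preimage[OF strict_subobj_submod[OF S], of X ?p] ker by simp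
  have "is_ses (subm X A) (subm X ?B) (subm ?Q S) id ?p"
  proof (rule is_ses_subm[OF AB])
    show "is_hom (subm X ?B) (subm ?Q S) ?p" by (rule hom_subm[OF h]) auto
    show "?p ` ?B = mcar (subm ?Q S)"
      using submod_subset[OF strict_subobj_submod[OF S]] by (auto simp flip: onto)
    show "hker (subm X ?B) (subm ?Q S) ?p = A"
      using hker_subm[of ?B X ?Q S ?p] ker AB by auto
  qed
  then have split: "\<theta> (subm X ?B) = \<theta> (subm X A) + \<theta> (subm ?Q S)"
    using VLam_ses[OF \<theta>] tc_fgmod[OF tc] strict_subobj_in A B S by meson
  consider "?B = mcar X" | "?B = A" | "A \<subset> ?B" "?B \<noteq> mcar X" using AB by blast
  then show "\<theta> (subm ?Q S) \<le> 0"
    by cases (use split le max[OF B] in auto)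
qed

lemma lperp_Qbar_subset_Pcl: "lperp G (Qbar G \<theta>) \<subseteq> Pcl G \<theta>"
proof
  fix X assume Xperp: "X \<in> lperp G (Qbar G \<theta>)"
  then have X: "X \<in> G" by (simp add: lperp_def)
  show "X \<in> Pcl G \<theta>"
  proof (rule ccontr)
    let ?big = "\<lambda>A. strict_subobj G X A \<and> A \<noteq> mcar X \<and> \<theta> X \<le> \<theta> (subm X A)"
    assume notP: "X \<notin> Pcl G \<theta>"
    then have "\<not> is_zero X" using X by (simp add: Pcl_def)
    then obtain K where K: "?big K" using strict_subobj_if_not_Pcl[OF X _ notP] by blast
    obtain A where A: "strict_subobj G X A" "A \<noteq> mcar X" "\<theta> X \<le> \<theta> (subm X A)"
      and max: "\<And>B. is_submod X B \<Longrightarrow> A \<subset> B \<Longrightarrow> \<not> ?big B"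
    proof (rule fgmod_submod_maximal[OF fd tc_fgmod[OF tc X], of K ?big])
      show "is_submod X K" using K strict_subobj_submod by blast
      show "?big K" by (rule K)
    next
      fix A assume "is_submod X A" "?big A" "\<And>B. is_submod X B \<Longrightarrow> A \<subset> B \<Longrightarrow> \<not> ?big B"
      then show thesis by (intro that) auto
    qed
    have "quotm X A \<in> Qbar G \<theta>"
    proof (rule quot_in_Qbar_if_maximal[OF X A(1) A(3)])
      fix B assume "strict_subobj G X B" "A \<subset> B" "B \<noteq> mcar X"
      then show "\<theta> (subm X B) < \<theta> X" using max[OF strict_subobj_submod] by fastforce
    qed
    then have "\<forall>x\<in>mcar X. quot_rep X A x = mzero (quotm X A)"
      using Xperp strict_morph_quot[OF tc fd X A(1)] unfolding lperp_def by blast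
    then have "mcar X \<subseteq> hker X (quotm X A) (quot_rep X A)" unfolding hker_def by blast
    then show False
      using A(2) submod_subset[OF strict_subobj_submod[OF A(1)]]
        hker_quot[OF tc_rmod[OF tc X] strict_subobj_submod[OF A(1)]] by blast
  qed
qed

lemma lperp_Qbar_eq_Pcl: "lperp G (Qbar G \<theta>) = Pcl G \<theta>"
proof
  show "Pcl G \<theta> \<subseteq> lperp G (Qbar G \<theta>)"
  proof
    fix X assume "X \<in> Pcl G \<theta>"
    then show "X \<in> lperp G (Qbar G \<theta>)"
      using strict_morph_Pcl_Qbar_zero by (auto simp: lperp_def Pcl_def)
  qed
qed (rule lperp_Qbar_subset_Pcl)

lemma Qcl_subset_Qbar: "Qcl G \<theta> \<subseteq> Qbar G \<theta>"
proof
  fix N assume N: "N \<in> Qcl G \<theta>"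
  have "\<theta> (subm N N') \<le> 0" if N': "strict_subobj G N N'" for N'
  proof (cases "is_zero (subm N N')")
    case True
    then show ?thesis using VLam_zero[OF \<theta> tc_fgmod[OF tc strict_subobj_in[OF N']]] by simp
  next
    case False
    moreover have "\<not> is_zero N"
    proof
      assume "is_zero N"
      then have "N' = {mzero N}"
        using submod_subset[OF strict_subobj_submod[OF N']] submod_zero_closed[OF strict_subobj_submod[OF N']]
        unfolding is_zero_def by auto
      then show False using False by (simp add: is_zero_def)
    qed
    ultimately show ?thesis using N N' by (auto simp: Qcl_def)
  qed
  then show "N \<in> Qbar G \<theta>" using N by (simp add: Qcl_def Qbar_def)
qed

lemma Qbar_subset_Qcl:
  assumes W: "Wcl G \<theta> = {X \<in> G. is_zero X}"
  shows "Qbar G \<theta> \<subseteq> Qcl G \<theta>"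
proof
  fix N assume N: "N \<in> Qbar G \<theta>"
  have "\<theta> (subm N N') < 0" if N': "strict_subobj G N N'" and nonzero: "\<not> is_zero (subm N N')" for N'
  proof (rule ccontr)
    assume "\<not> \<theta> (subm N N') < 0"
    then have "\<theta> (subm N N') = 0" using N N' by (force simp: Qbar_def)
    moreover have "\<theta> (subm (subm N N') M') \<le> 0" if "strict_subobj G (subm N N') M'" for M'
      using N strict_subobj_trans[OF that N'] by (simp add: Qbar_def)
    ultimately have "subm N N' \<in> Wcl G \<theta>"
      using \<theta> strict_subobj_in[OF N'] by (simp add: Wcl_def DG_def)
    then show False using W nonzero by simp
  qed
  then show "N \<in> Qcl G \<theta>" using N by (simp add: Qcl_def Qbar_def)
qed

end

theorem mainTheorem13:
  fixes \<iota> :: "'k::field \<Rightarrow> 'l::ring_1"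
    and \<G> :: "('l, 'm) rmod set"
    and \<theta> :: "('l, 'm) rmod \<Rightarrow> real"
  assumes "fd_algebra \<iota>"
    and "infinite (UNIV :: 'm set)" and "\<exists>h :: 'l \<Rightarrow> 'm. inj h"
    and "torsion_class \<G>"
    and "\<theta> \<in> VLam"
  shows "rperp \<G> (Pcl \<G> \<theta>) = Qbar \<G> \<theta> \<and> lperp \<G> (Qbar \<G> \<theta>) = Pcl \<G> \<theta> \<and>
         (Wcl \<G> \<theta> = {X \<in> \<G>. is_zero X} \<longrightarrow>
            Qbar \<G> \<theta> = Qcl \<G> \<theta> \<and> Qcl \<G> \<theta> = rperp \<G> (Pcl \<G> \<theta>) \<and> Pcl \<G> \<theta> = lperp \<G> (Qcl \<G> \<theta>))"
proof -
  note tc = assms(4) and fd = assms(1) and \<theta> = assms(5)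
  have rperp: "rperp \<G> (Pcl \<G> \<theta>) = Qbar \<G> \<theta>" by (rule rperp_Pcl_eq_Qbar[OF tc fd \<theta>])
  have lperp: "lperp \<G> (Qbar \<G> \<theta>) = Pcl \<G> \<theta>" by (rule lperp_Qbar_eq_Pcl[OF tc fd \<theta>])
  have "Wcl \<G> \<theta> = {X \<in> \<G>. is_zero X} \<longrightarrow>
      Qbar \<G> \<theta> = Qcl \<G> \<theta> \<and> Qcl \<G> \<theta> = rperp \<G> (Pcl \<G> \<theta>) \<and> Pcl \<G> \<theta> = lperp \<G> (Qcl \<G> \<theta>)"
  proof
    assume "Wcl \<G> \<theta> = {X \<in> \<G>. is_zero X}"
    then have "Qbar \<G> \<theta> = Qcl \<G> \<theta>"
      using Qbar_subset_Qcl[OF tc fd \<theta>] Qcl_subset_Qbar[OF tc fd \<theta>] by (intro subset_antisym)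
    with rperp lperp show "Qbar \<G> \<theta> = Qcl \<G> \<theta> \<and> Qcl \<G> \<theta> = rperp \<G> (Pcl \<G> \<theta>) \<and>
        Pcl \<G> \<theta> = lperp \<G> (Qcl \<G> \<theta>)" by simp
  qed
  with rperp lperp show ?thesis by blast
qed

end
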